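(* Let $X$ be an FK-space containing $\phi$ in which $\overline{\phi}$ (the closure of $\phi$ in $X$) has $\sigma_p^q[K]$. Then $D_p^qF^+(X)=(\overline{\phi})^{dd}$.
   Context: An FK-space is a vector subspace of the space $w$ of all complex sequences with a complete metrizable locally convex topology in which coordinate functionals are continuous; $X'$ is its continuous dual. $\delta^j$ has $1$ in position $j$, $0$ elsewhere; $\phi=\operatorname{span}\{\delta^j\}$. $p(n)<q(n)$ are nonnegative integer sequences with $q(n)\to\infty$. For $x\in w$, $x^{(k)}=\sum_{j=1}^kx_j\delta^j$; a subset $Y\subseteq X$ has $\sigma_p^q[K]$ if $\frac{1}{q(n)-p(n)}\sum_{k=p(n)+1}^{q(n)}x^{(k)}\to x$ in $X$ for every $x\in Y$. $\sigma_p^q[s]=\{x:\lim_n\frac{1}{q(n)-p(n)}\sum_{k=p(n)+1}^{q(n)}\sum_{j=1}^kx_j\text{ exists}\}$; for $E\subseteq w$, $E^d=\{x\in w:(x_ny_n)_n\in\sigma_p^q[s]\ \forall y\in E\}$ and $E^{dd}=(E^d)^d$. $D_p^qF^+(X)=\{x\in w:\lim_n\frac{1}{q(n)-p(n)}\sum_{k=p(n)+1}^{q(n)}\sum_{j=1}^kx_jf(\delta^j)\text{ exists }\forall f\in X'\}$. *)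

theory Defs
  imports "HOL-Analysis.Analysis"
begin

text \<open>Complex sequences (the space w) are functions nat => complex, indexed from 0.\<close>
type_synonym seq = "nat \<Rightarrow> complex"

definition seq_add :: "seq \<Rightarrow> seq \<Rightarrow> seq" where
  "seq_add x y = (\<lambda>j. x j + y j)"

definition seq_smult :: "complex \<Rightarrow> seq \<Rightarrow> seq" where
  "seq_smult c x = (\<lambda>j. c * x j)"

definition seq_diff :: "seq \<Rightarrow> seq \<Rightarrow> seq" where
  "seq_diff x y = (\<lambda>j. x j - y j)"

definition zero_seq :: seq where
  "zero_seq = (\<lambda>j. 0)"

definition delta :: "nat \<Rightarrow> seq" where
  "delta j = (\<lambda>i. if i = j then 1 else 0)"

definition phi :: "seq set" where
  "phi = {x. \<exists>F. finite F \<and> (\<exists>c. x = (\<lambda>i. \<Sum>j\<in>F. c j * delta j i))}"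

definition sec :: "seq \<Rightarrow> nat \<Rightarrow> seq" where
  "sec x k = (\<lambda>i. if i < k then x i else 0)"

definition is_subspace :: "seq set \<Rightarrow> bool" where
  "is_subspace X \<longleftrightarrow> zero_seq \<in> X \<and> (\<forall>x\<in>X. \<forall>y\<in>X. seq_add x y \<in> X)
      \<and> (\<forall>c. \<forall>x\<in>X. seq_smult c x \<in> X)"

definition seq_convex :: "seq set \<Rightarrow> bool" where
  "seq_convex V \<longleftrightarrow> (\<forall>x\<in>V. \<forall>y\<in>V. \<forall>t::real. 0 \<le> t \<and> t \<le> 1 \<longrightarrow>
      seq_add (seq_smult (complex_of_real t) x) (seq_smult (complex_of_real (1 - t)) y) \<in> V)"

definition tvs_cauchy :: "seq topology \<Rightarrow> (nat \<Rightarrow> seq) \<Rightarrow> bool" where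
  "tvs_cauchy T s \<longleftrightarrow> (\<forall>n. s n \<in> topspace T) \<and>
     (\<forall>U. openin T U \<and> zero_seq \<in> U \<longrightarrow>
        (\<exists>N. \<forall>m\<ge>N. \<forall>n\<ge>N. seq_diff (s m) (s n) \<in> U))"

definition FK_space :: "seq set \<Rightarrow> seq topology \<Rightarrow> bool" where
  "FK_space X T \<longleftrightarrow>
     is_subspace X \<and> topspace T = X \<and>
     continuous_map (prod_topology T T) T (\<lambda>(x, y). seq_add x y) \<and>
     continuous_map (prod_topology (euclidean :: complex topology) T) T (\<lambda>(c, x). seq_smult c x) \<and>
     (\<forall>U. openin T U \<and> zero_seq \<in> U \<longrightarrow>
        (\<exists>V. openin T V \<and> zero_seq \<in> V \<and> seq_convex V \<and> V \<subseteq> U)) \<and>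
     metrizable_space T \<and>
     (\<forall>s. tvs_cauchy T s \<longrightarrow> (\<exists>x\<in>X. limitin T s x sequentially)) \<and>
     (\<forall>j. continuous_map T (euclidean :: complex topology) (\<lambda>x. x j))"

definition cdual :: "seq set \<Rightarrow> seq topology \<Rightarrow> (seq \<Rightarrow> complex) set" where
  "cdual X T = {f. (\<forall>x\<in>X. \<forall>y\<in>X. f (seq_add x y) = f x + f y) \<and>
                   (\<forall>c. \<forall>x\<in>X. f (seq_smult c x) = c * f x) \<and>
                   continuous_map T (euclidean :: complex topology) f}"

definition avg_section :: "(nat \<Rightarrow> nat) \<Rightarrow> (nat \<Rightarrow> nat) \<Rightarrow> seq \<Rightarrow> nat \<Rightarrow> seq" where
  "avg_section p q x n = (\<lambda>i. (\<Sum>k\<in>{p n + 1..q n}. sec x k i) / of_nat (q n - p n))"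

definition has_sigma_K :: "(nat \<Rightarrow> nat) \<Rightarrow> (nat \<Rightarrow> nat) \<Rightarrow> seq topology \<Rightarrow> seq set \<Rightarrow> bool" where
  "has_sigma_K p q T Y \<longleftrightarrow> (\<forall>x\<in>Y. limitin T (avg_section p q x) x sequentially)"

definition sigma_s :: "(nat \<Rightarrow> nat) \<Rightarrow> (nat \<Rightarrow> nat) \<Rightarrow> seq set" where
  "sigma_s p q = {x. convergent (\<lambda>n. (\<Sum>k\<in>{p n + 1..q n}. \<Sum>j<k. x j) / of_nat (q n - p n))}"

definition d_dual :: "(nat \<Rightarrow> nat) \<Rightarrow> (nat \<Rightarrow> nat) \<Rightarrow> seq set \<Rightarrow> seq set" where
  "d_dual p q E = {x. \<forall>y\<in>E. (\<lambda>n. x n * y n) \<in> sigma_s p q}"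

definition DF_plus :: "(nat \<Rightarrow> nat) \<Rightarrow> (nat \<Rightarrow> nat) \<Rightarrow> seq set \<Rightarrow> seq topology \<Rightarrow> seq set" where
  "DF_plus p q X T = {x. \<forall>f\<in>cdual X T.
      convergent (\<lambda>n. (\<Sum>k\<in>{p n + 1..q n}. \<Sum>j<k. x j * f (delta j)) / of_nat (q n - p n))}"

end

theory Submission
  imports Defs
begin

(* For f in X' the coefficient sequence u_j = f(delta^j) lies in (closure phi)^d: f applied to the
   averaged sections of z in closure phi, which converge to z by sigma_p^q[K], gives exactly the
   sigma-means of sum z_j u_j.  Hence (closure phi)^dd is contained in D_p^qF^+(X).
   Conversely every y in (closure phi)^d is such a coefficient sequence.  The sigma-means
   z |-> sigma_n(z, y) are continuous linear functionals on the closed subspace Y = closure phi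
   converging pointwise, so by the Baire category theorem (X is complete and metrizable) they are
   uniformly bounded near 0 in Y.  Their limit g is then bounded on a convex neighbourhood of 0,
   and the Hahn-Banach theorem, dominated by the Minkowski functional of that neighbourhood,
   extends g to some f in X'.  Finally f(delta^j) = g(delta^j) = y_j, since delta^j has
   sigma_p^q[K]. *)

section \<open>Averaged sections and sigma-means\<close>

lemma seq_ops_apply:
  "seq_add x y j = x j + y j" "seq_smult c x j = c * x j" "seq_diff x y j = x j - y j"
  "zero_seq j = 0"
  by (simp_all add: seq_add_def seq_smult_def seq_diff_def zero_seq_def)

abbreviation seq_scaleR :: "real \<Rightarrow> seq \<Rightarrow> seq" where
  "seq_scaleR t x \<equiv> seq_smult (complex_of_real t) x"

lemma seq_smult_zero: "seq_smult c zero_seq = zero_seq"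
  by (simp add: seq_smult_def zero_seq_def)

lemma seq_diff_self: "seq_diff x x = zero_seq"
  by (simp add: seq_diff_def zero_seq_def)

lemma seq_diff_eq_add_smult: "seq_diff x y = seq_add x (seq_smult (-1) y)"
  by (simp add: seq_add_def seq_smult_def seq_diff_def)

definition sigma_mean :: "(nat \<Rightarrow> nat) \<Rightarrow> (nat \<Rightarrow> nat) \<Rightarrow> seq \<Rightarrow> seq \<Rightarrow> nat \<Rightarrow> complex" where
  "sigma_mean p q z y n = (\<Sum>k\<in>{p n + 1..q n}. \<Sum>j<k. z j * y j) / of_nat (q n - p n)"

lemma mult_mem_sigma_s_iff: "(\<lambda>j. z j * y j) \<in> sigma_s p q \<longleftrightarrow> convergent (sigma_mean p q z y)"
  by (simp add: sigma_s_def sigma_mean_def[abs_def])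

lemma mem_DF_plus_iff:
  "x \<in> DF_plus p q X T \<longleftrightarrow> (\<forall>f\<in>cdual X T. convergent (sigma_mean p q x (\<lambda>j. f (delta j))))"
  by (simp add: DF_plus_def sigma_mean_def[abs_def])

lemma sigma_mean_add: "sigma_mean p q (seq_add a b) y n = sigma_mean p q a y n + sigma_mean p q b y n"
  unfolding sigma_mean_def seq_add_def by (simp add: algebra_simps sum.distrib add_divide_distrib)

lemma sigma_mean_smult: "sigma_mean p q (seq_smult c a) y n = c * sigma_mean p q a y n"
  unfolding sigma_mean_def seq_smult_def by (simp add: sum_distrib_left mult.assoc)

lemma sigma_mean_commute: "sigma_mean p q z y = sigma_mean p q y z"
  by (simp add: sigma_mean_def[abs_def] mult.commute)

lemma sigma_mean_delta: "sigma_mean p q (delta j) y n = y j * avg_section p q (delta j) n j"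
proof -
  have "(\<Sum>i<k. delta j i * y i) = y j * sec (delta j) k j" for k
  proof -
    have "(\<Sum>i<k. delta j i * y i) = (\<Sum>i<k. if i = j then y j else 0)"
      by (rule sum.cong) (auto simp: delta_def)
    then show ?thesis by (simp add: sec_def delta_def)
  qed
  then show ?thesis unfolding sigma_mean_def avg_section_def by (simp add: sum_distrib_left)
qed

lemma mem_phi_iff: "x \<in> phi \<longleftrightarrow> (\<exists>N. \<forall>i\<ge>N. x i = 0)"
proof
  assume "x \<in> phi"
  then obtain F c where F: "finite F" "x = (\<lambda>i. \<Sum>j\<in>F. c j * delta j i)"
    unfolding phi_def by blast
  obtain N where "\<forall>j\<in>F. j < N"
    using F(1) finite_nat_bounded by blast
  then have "x i = 0" if "i \<ge> N" for i
  proof -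
    have "\<forall>j\<in>F. delta j i = 0" using \<open>\<forall>j\<in>F. j < N\<close> that by (auto simp: delta_def)
    then show ?thesis using F(2) by simp
  qed
  then show "\<exists>N. \<forall>i\<ge>N. x i = 0" by blast
next
  assume "\<exists>N. \<forall>i\<ge>N. x i = 0"
  then obtain N where N: "\<forall>i\<ge>N. x i = 0" by blast
  have "x i = (\<Sum>j<N. x j * delta j i)" for i
  proof -
    have "(\<Sum>j<N. x j * delta j i) = (\<Sum>j<N. if j = i then x i else 0)"
      by (rule sum.cong) (auto simp: delta_def)
    then show ?thesis using N by (auto simp: not_less)
  qed
  then show "x \<in> phi" unfolding phi_def by blast
qed

lemma delta_in_phi: "delta j \<in> phi"
  unfolding mem_phi_iff by (rule exI[of _ "Suc j"]) (auto simp: delta_def)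

lemma seq_add_in_phi: "x \<in> phi \<Longrightarrow> y \<in> phi \<Longrightarrow> seq_add x y \<in> phi"
  unfolding mem_phi_iff seq_add_def by (metis add.right_neutral max.cobounded1 max.cobounded2 order_trans)

lemma seq_smult_in_phi: "x \<in> phi \<Longrightarrow> seq_smult c x \<in> phi"
  unfolding mem_phi_iff seq_smult_def by auto

lemma zero_seq_in_phi: "zero_seq \<in> phi"
  unfolding mem_phi_iff zero_seq_def by auto

lemma linear_functional_sum_delta:
  assumes add: "\<And>x y. x \<in> X \<Longrightarrow> y \<in> X \<Longrightarrow> f (seq_add x y) = f x + f y"
    and smult: "\<And>c x. x \<in> X \<Longrightarrow> f (seq_smult c x) = c * f x"
    and "phi \<subseteq> X" and "finite F"
  shows "f (\<lambda>i. \<Sum>j\<in>F. c j * delta j i) = (\<Sum>j\<in>F. c j * f (delta j))"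
  using \<open>finite F\<close>
proof (induction F rule: finite_induct)
  case empty
  have "zero_seq \<in> X" using \<open>phi \<subseteq> X\<close> zero_seq_in_phi by blast
  then have "f (seq_smult 0 zero_seq) = 0" using smult by simp
  then show ?case by (simp add: seq_smult_def zero_seq_def)
next
  case (insert a F)
  let ?S = "seq_smult (c a) (delta a)" and ?R = "\<lambda>i. \<Sum>j\<in>F. c j * delta j i"
  have split: "(\<lambda>i. \<Sum>j\<in>insert a F. c j * delta j i) = seq_add ?S ?R"
    using insert by (auto simp: seq_add_def seq_smult_def)
  have R: "?R \<in> X"
    using \<open>phi \<subseteq> X\<close> insert(1) unfolding phi_def by blast
  have d: "delta a \<in> X" and S: "?S \<in> X"
    using \<open>phi \<subseteq> X\<close> seq_smult_in_phi delta_in_phi by blast+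
  have "f (\<lambda>i. \<Sum>j\<in>insert a F. c j * delta j i) = f ?S + f ?R"
    unfolding split by (rule add[OF S R])
  also have "f ?S = c a * f (delta a)" by (rule smult[OF d])
  also note insert.IH
  finally show ?case using insert(1,2) by simp
qed

lemma avg_section_eq_sum_delta:
  "avg_section p q z n = (\<lambda>i. \<Sum>j<q n.
      ((\<Sum>k\<in>{p n + 1..q n}. if j < k then z j else 0) / of_nat (q n - p n)) * delta j i)"
proof
  fix i
  have "(\<Sum>j<q n. ((\<Sum>k\<in>{p n + 1..q n}. if j < k then z j else 0) / of_nat (q n - p n)) * delta j i)
     = (\<Sum>j<q n. if j = i then (\<Sum>k\<in>{p n + 1..q n}. if i < k then z i else 0) / of_nat (q n - p n) else 0)"
    by (rule sum.cong) (auto simp: delta_def)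
  moreover have "(\<Sum>k\<in>{p n + 1..q n}. sec z k i) = 0" if "\<not> i < q n"
    using that unfolding sec_def by (auto intro!: sum.neutral)
  ultimately show "avg_section p q z n i = (\<Sum>j<q n.
      ((\<Sum>k\<in>{p n + 1..q n}. if j < k then z j else 0) / of_nat (q n - p n)) * delta j i)"
    unfolding avg_section_def sec_def by (cases "i < q n") simp_all
qed

lemma functional_avg_section:
  assumes add: "\<And>x y. x \<in> X \<Longrightarrow> y \<in> X \<Longrightarrow> f (seq_add x y) = f x + f y"
    and smult: "\<And>c x. x \<in> X \<Longrightarrow> f (seq_smult c x) = c * f x"
    and "phi \<subseteq> X"
  shows "f (avg_section p q z n) = sigma_mean p q z (\<lambda>j. f (delta j)) n"
proof -
  let ?I = "{p n + 1..q n}" and ?d = "of_nat (q n - p n) :: complex"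
  have "f (avg_section p q z n)
      = (\<Sum>j<q n. ((\<Sum>k\<in>?I. if j < k then z j else 0) / ?d) * f (delta j))"
    unfolding avg_section_eq_sum_delta by (rule linear_functional_sum_delta[OF add smult \<open>phi \<subseteq> X\<close>]) auto
  also have "\<dots> = (\<Sum>j<q n. \<Sum>k\<in>?I. if j < k then z j * f (delta j) else 0) / ?d"
    by (auto simp: sum_divide_distrib sum_distrib_right intro!: sum.cong)
  also have "(\<Sum>j<q n. \<Sum>k\<in>?I. if j < k then z j * f (delta j) else 0)
      = (\<Sum>k\<in>?I. \<Sum>j<q n. if j < k then z j * f (delta j) else 0)"
    by (rule sum.swap)
  also have "\<dots> = (\<Sum>k\<in>?I. \<Sum>j<k. z j * f (delta j))"
  proof (rule sum.cong[OF refl])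
    fix k assume "k \<in> ?I"
    then have "{j \<in> {..<q n}. j < k} = {..<k}" by auto
    then show "(\<Sum>j<q n. if j < k then z j * f (delta j) else 0) = (\<Sum>j<k. z j * f (delta j))"
      by (simp add: sum.inter_filter[symmetric])
  qed
  finally show ?thesis unfolding sigma_mean_def .
qed

section \<open>The Hahn-Banach theorem\<close>

locale sublinear_extension =
  fixes X Y :: "seq set" and p h :: "seq \<Rightarrow> real"
  assumes add_in_X: "\<And>x y. x \<in> X \<Longrightarrow> y \<in> X \<Longrightarrow> seq_add x y \<in> X"
    and scaleR_in_X: "\<And>x t. x \<in> X \<Longrightarrow> seq_scaleR t x \<in> X"
    and Y_subset: "Y \<subseteq> X" and zero_in_Y: "zero_seq \<in> Y"
    and add_in_Y: "\<And>x y. x \<in> Y \<Longrightarrow> y \<in> Y \<Longrightarrow> seq_add x y \<in> Y"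
    and scaleR_in_Y: "\<And>x t. x \<in> Y \<Longrightarrow> seq_scaleR t x \<in> Y"
    and p_add: "\<And>x y. x \<in> X \<Longrightarrow> y \<in> X \<Longrightarrow> p (seq_add x y) \<le> p x + p y"
    and p_scaleR: "\<And>x t. x \<in> X \<Longrightarrow> t > 0 \<Longrightarrow> p (seq_scaleR t x) = t * p x"
    and h_add: "\<And>x y. x \<in> Y \<Longrightarrow> y \<in> Y \<Longrightarrow> h (seq_add x y) = h x + h y"
    and h_scaleR: "\<And>x t. x \<in> Y \<Longrightarrow> h (seq_scaleR t x) = t * h x"
    and h_le_p: "\<And>x. x \<in> Y \<Longrightarrow> h x \<le> p x"
begin

text \<open>Partial extensions of \<open>h\<close> are handled through their graphs, so that Zorn's lemma
  can be applied to the inclusion order.\<close>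

definition admissible :: "(seq \<times> real) set \<Rightarrow> bool" where
  "admissible G \<longleftrightarrow> (\<forall>u a b. (u, a) \<in> G \<longrightarrow> (u, b) \<in> G \<longrightarrow> a = b) \<and>
     (\<forall>u a. (u, a) \<in> G \<longrightarrow> u \<in> X) \<and>
     (\<forall>u\<in>Y. (u, h u) \<in> G) \<and>
     (\<forall>u a v b. (u, a) \<in> G \<longrightarrow> (v, b) \<in> G \<longrightarrow> (seq_add u v, a + b) \<in> G) \<and>
     (\<forall>u a t. (u, a) \<in> G \<longrightarrow> (seq_scaleR t u, t * a) \<in> G) \<and>
     (\<forall>u a. (u, a) \<in> G \<longrightarrow> a \<le> p u)"

lemma admissibleD:
  assumes "admissible G"
  shows "\<And>u a b. (u, a) \<in> G \<Longrightarrow> (u, b) \<in> G \<Longrightarrow> a = b"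
    "\<And>u a. (u, a) \<in> G \<Longrightarrow> u \<in> X"
    "\<And>u. u \<in> Y \<Longrightarrow> (u, h u) \<in> G"
    "\<And>u a v b. (u, a) \<in> G \<Longrightarrow> (v, b) \<in> G \<Longrightarrow> (seq_add u v, a + b) \<in> G"
    "\<And>u a t. (u, a) \<in> G \<Longrightarrow> (seq_scaleR t u, t * a) \<in> G"
    "\<And>u a. (u, a) \<in> G \<Longrightarrow> a \<le> p u"
  using assms unfolding admissible_def by blast+

lemma admissible_zero:
  assumes "admissible G" shows "(zero_seq, 0) \<in> G"
proof -
  have "(seq_scaleR 0 zero_seq, 0 * h zero_seq) \<in> G"
    using admissibleD(3,5)[OF assms] zero_in_Y by blast
  then show ?thesis by (simp add: seq_smult_zero)
qed

lemma admissible_graph_h: "admissible {(u, h u) | u. u \<in> Y}"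
  unfolding admissible_def using Y_subset h_le_p add_in_Y scaleR_in_Y by (auto simp: h_add h_scaleR)

lemma admissible_Union_chain:
  assumes "C \<noteq> {}" "\<And>G. G \<in> C \<Longrightarrow> admissible G" "\<And>G1 G2. G1 \<in> C \<Longrightarrow> G2 \<in> C \<Longrightarrow> G1 \<subseteq> G2 \<or> G2 \<subseteq> G1"
  shows "admissible (\<Union>C)"
proof -
  have common: "\<exists>G\<in>C. z1 \<in> G \<and> z2 \<in> G" if "z1 \<in> \<Union>C" "z2 \<in> \<Union>C" for z1 z2
    using that assms(3) by blast
  note D = admissibleD[OF assms(2)]
  show ?thesis
    unfolding admissible_def
  proof (intro conjI allI impI ballI)
    fix u a b assume "(u, a) \<in> \<Union>C" "(u, b) \<in> \<Union>C"
    then show "a = b" using common D(1) by metis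
  next
    fix u a v b assume "(u, a) \<in> \<Union>C" "(v, b) \<in> \<Union>C"
    then show "(seq_add u v, a + b) \<in> \<Union>C" using common D(4) by (metis UnionI)
  next
    fix u assume "u \<in> Y" then show "(u, h u) \<in> \<Union>C" using assms(1) D(3) by blast
  qed (use D(2,5,6) in blast)+
qed

definition graph_extend :: "(seq \<times> real) set \<Rightarrow> seq \<Rightarrow> real \<Rightarrow> (seq \<times> real) set" where
  "graph_extend G x0 c = {(seq_add u (seq_scaleR t x0), a + t * c) | u a t. (u, a) \<in> G}"

text \<open>\<open>c\<close> is the value given to \<open>x0\<close>; the two bounds are what keeps the extension
  \<open>graph_extend G x0 c\<close> below \<open>p\<close> for positive and for negative multiples of \<open>x0\<close>.\<close>

lemma extension_value_exists:
  assumes G: "admissible G" and x0: "x0 \<in> X"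
  shows "\<exists>c. (\<forall>w b. (w, b) \<in> G \<longrightarrow> b - p (seq_add w (seq_scaleR (-1) x0)) \<le> c)
           \<and> (\<forall>v a. (v, a) \<in> G \<longrightarrow> c \<le> p (seq_add v x0) - a)"
proof -
  note D = admissibleD[OF G]
  let ?S = "{b - p (seq_add w (seq_scaleR (-1) x0)) | w b. (w, b) \<in> G}"
  have key: "b - p (seq_add w (seq_scaleR (-1) x0)) \<le> p (seq_add v x0) - a"
    if "(v, a) \<in> G" "(w, b) \<in> G" for v a w b
  proof -
    have vX: "v \<in> X" and wX: "w \<in> X" using that D(2) by auto
    have "a + b \<le> p (seq_add v w)" using D(4,6) that by blast
    also have "seq_add v w = seq_add (seq_add v x0) (seq_add w (seq_scaleR (-1) x0))"
      by (simp add: seq_add_def seq_smult_def)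
    also have "p \<dots> \<le> p (seq_add v x0) + p (seq_add w (seq_scaleR (-1) x0))"
      using vX wX x0 by (intro p_add add_in_X scaleR_in_X)
    finally show ?thesis by simp
  qed
  have "?S \<noteq> {}" using admissible_zero[OF G] by blast
  moreover have "bdd_above ?S"
    unfolding bdd_above_def using key[OF admissible_zero[OF G]] by blast
  ultimately show ?thesis
    by (intro exI[of _ "Sup ?S"] conjI allI impI cSup_upper cSup_least) (use key in blast)+
qed

context
  fixes G x0 c
  assumes G: "admissible G" and x0: "x0 \<in> X" "\<forall>a. (x0, a) \<notin> G"
    and c_lower: "\<And>w b. (w, b) \<in> G \<Longrightarrow> b - p (seq_add w (seq_scaleR (-1) x0)) \<le> c"
    and c_upper: "\<And>v a. (v, a) \<in> G \<Longrightarrow> c \<le> p (seq_add v x0) - a"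
begin

lemma graph_extend_unique:
  assumes "(z, a) \<in> graph_extend G x0 c" "(z, b) \<in> graph_extend G x0 c"
  shows "a = b"
proof -
  note D = admissibleD[OF G]
  obtain u a1 t where u: "z = seq_add u (seq_scaleR t x0)" "a = a1 + t * c" "(u, a1) \<in> G"
    using assms(1) unfolding graph_extend_def by blast
  obtain v b1 s where v: "z = seq_add v (seq_scaleR s x0)" "b = b1 + s * c" "(v, b1) \<in> G"
    using assms(2) unfolding graph_extend_def by blast
  have uv: "u i - v i = complex_of_real (s - t) * x0 i" for i
    using fun_cong[OF trans[OF u(1)[symmetric] v(1)], of i] by (simp add: seq_ops_apply algebra_simps)
  have "t = s"
  proof (rule ccontr)
    assume "t \<noteq> s"
    have "(seq_add u (seq_scaleR (-1) v), a1 + (-1) * b1) \<in> G" using D(4,5) u(3) v(3) by blast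
    then have "(seq_scaleR (1 / (s - t)) (seq_add u (seq_scaleR (-1) v)), (1 / (s - t)) * (a1 + (-1) * b1)) \<in> G"
      using D(5) by blast
    moreover have "seq_scaleR (1 / (s - t)) (seq_add u (seq_scaleR (-1) v)) = x0"
    proof
      fix i
      have "complex_of_real (s - t) \<noteq> 0" using \<open>t \<noteq> s\<close> by simp
      with uv[of i] show "seq_scaleR (1 / (s - t)) (seq_add u (seq_scaleR (-1) v)) i = x0 i"
        by (simp add: seq_ops_apply field_simps)
    qed
    ultimately show False using x0(2) by auto
  qed
  moreover have "u = v" using uv \<open>t = s\<close> by auto
  ultimately show "a = b" using u v D(1) by blast
qed

lemma graph_extend_dominated:
  assumes "(z, a) \<in> graph_extend G x0 c"
  shows "a \<le> p z"
proof -
  note D = admissibleD[OF G]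
  obtain u a1 t where u: "z = seq_add u (seq_scaleR t x0)" "a = a1 + t * c" "(u, a1) \<in> G"
    using assms unfolding graph_extend_def by blast
  have uX: "u \<in> X" using D(2) u(3) by blast
  consider "t = 0" | "t > 0" | "t < 0" by linarith
  then show "a \<le> p z"
  proof cases
    case 1
    then have "z = u" using u(1) by (simp add: seq_add_def seq_smult_def)
    then show ?thesis using u 1 D(6) by simp
  next
    case 2
    have "(seq_scaleR (1 / t) u, (1 / t) * a1) \<in> G" using D(5) u(3) by blast
    from c_upper[OF this] have "t * c \<le> t * p (seq_add (seq_scaleR (1 / t) u) x0) - a1"
      using 2 by (simp add: field_simps)
    also have "t * p (seq_add (seq_scaleR (1 / t) u) x0) = p (seq_scaleR t (seq_add (seq_scaleR (1 / t) u) x0))"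
      by (rule p_scaleR[OF add_in_X[OF scaleR_in_X[OF uX] x0(1)] 2, symmetric])
    also have "seq_scaleR t (seq_add (seq_scaleR (1 / t) u) x0) = z"
      unfolding u(1) using 2 by (intro ext) (simp add: seq_add_def seq_smult_def field_simps)
    finally show ?thesis using u(2) by simp
  next
    case 3
    define s where "s = - t"
    have s: "s > 0" using 3 s_def by simp
    have "(seq_scaleR (1 / s) u, (1 / s) * a1) \<in> G" using D(5) u(3) by blast
    from c_lower[OF this] have "a1 - s * p (seq_add (seq_scaleR (1 / s) u) (seq_scaleR (-1) x0)) \<le> s * c"
      using s by (simp add: field_simps)
    also have "s * p (seq_add (seq_scaleR (1 / s) u) (seq_scaleR (-1) x0))
        = p (seq_scaleR s (seq_add (seq_scaleR (1 / s) u) (seq_scaleR (-1) x0)))"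
      by (rule p_scaleR[OF add_in_X[OF scaleR_in_X[OF uX] scaleR_in_X[OF x0(1)]] s, symmetric])
    also have "seq_scaleR s (seq_add (seq_scaleR (1 / s) u) (seq_scaleR (-1) x0)) = z"
      unfolding u(1) s_def using 3 by (intro ext) (simp add: seq_add_def seq_smult_def field_simps)
    finally show ?thesis using u(2) s_def by simp
  qed
qed

lemma admissible_graph_extend: "admissible (graph_extend G x0 c)"
  unfolding admissible_def
proof (intro conjI allI impI ballI)
  note D = admissibleD[OF G]
  fix z a assume "(z, a) \<in> graph_extend G x0 c"
  then obtain u a1 t where "z = seq_add u (seq_scaleR t x0)" "(u, a1) \<in> G"
    unfolding graph_extend_def by blast
  then show "z \<in> X" using D(2) x0(1) add_in_X scaleR_in_X by blast
next
  note D = admissibleD[OF G]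
  fix u assume "u \<in> Y"
  have "(seq_add u (seq_scaleR 0 x0), h u + 0 * c) \<in> graph_extend G x0 c"
    unfolding graph_extend_def using D(3)[OF \<open>u \<in> Y\<close>] by blast
  moreover have "seq_add u (seq_scaleR 0 x0) = u" by (simp add: seq_add_def seq_smult_def)
  ultimately show "(u, h u) \<in> graph_extend G x0 c" by simp
next
  note D = admissibleD[OF G]
  fix z a w b assume "(z, a) \<in> graph_extend G x0 c" "(w, b) \<in> graph_extend G x0 c"
  then obtain u a1 t v b1 s where
    u: "z = seq_add u (seq_scaleR t x0)" "a = a1 + t * c" "(u, a1) \<in> G" and
    v: "w = seq_add v (seq_scaleR s x0)" "b = b1 + s * c" "(v, b1) \<in> G"
    unfolding graph_extend_def by blast
  have "(seq_add (seq_add u v) (seq_scaleR (t + s) x0), (a1 + b1) + (t + s) * c) \<in> graph_extend G x0 c"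
    unfolding graph_extend_def using D(4)[OF u(3) v(3)] by blast
  moreover have "seq_add (seq_add u v) (seq_scaleR (t + s) x0) = seq_add z w"
    unfolding u v by (simp add: seq_add_def seq_smult_def algebra_simps)
  ultimately show "(seq_add z w, a + b) \<in> graph_extend G x0 c" unfolding u v by (simp add: algebra_simps)
next
  note D = admissibleD[OF G]
  fix z a r assume "(z, a) \<in> graph_extend G x0 c"
  then obtain u a1 t where u: "z = seq_add u (seq_scaleR t x0)" "a = a1 + t * c" "(u, a1) \<in> G"
    unfolding graph_extend_def by blast
  have "(seq_add (seq_scaleR r u) (seq_scaleR (r * t) x0), r * a1 + (r * t) * c) \<in> graph_extend G x0 c"
    unfolding graph_extend_def using D(5)[OF u(3)] by blast
  moreover have "seq_add (seq_scaleR r u) (seq_scaleR (r * t) x0) = seq_scaleR r z"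
    unfolding u by (simp add: seq_add_def seq_smult_def algebra_simps)
  ultimately show "(seq_scaleR r z, r * a) \<in> graph_extend G x0 c" unfolding u by (simp add: algebra_simps)
qed (use graph_extend_unique graph_extend_dominated in blast)+

end

lemma admissible_extend:
  assumes G: "admissible G" and "x0 \<in> X" "\<forall>a. (x0, a) \<notin> G"
  shows "\<exists>G'. admissible G' \<and> G \<subset> G'"
proof -
  obtain c where "\<And>w b. (w, b) \<in> G \<Longrightarrow> b - p (seq_add w (seq_scaleR (-1) x0)) \<le> c"
    "\<And>v a. (v, a) \<in> G \<Longrightarrow> c \<le> p (seq_add v x0) - a"
    using extension_value_exists[OF G \<open>x0 \<in> X\<close>] by blast
  note ext = admissible_graph_extend[OF G assms(2,3) this]
  have "(seq_add u (seq_scaleR t x0), a + t * c) \<in> graph_extend G x0 c" if "(u, a) \<in> G" for u a t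
    using that unfolding graph_extend_def by blast
  from this[of _ _ 0] this[OF admissible_zero[OF G], of 1]
  have "G \<subseteq> graph_extend G x0 c" "(x0, c) \<in> graph_extend G x0 c"
    by (auto simp: seq_add_def seq_smult_def zero_seq_def)
  then show ?thesis using ext assms(3) by blast
qed

lemma exists_maximal_admissible:
  "\<exists>M. admissible M \<and> (\<forall>G. admissible G \<longrightarrow> M \<subseteq> G \<longrightarrow> G = M)"
proof -
  have "\<forall>C\<in>chains {G. admissible G}. \<exists>U\<in>{G. admissible G}. \<forall>G\<in>C. G \<subseteq> U"
  proof
    fix C assume C: "C \<in> chains {G. admissible G}"
    show "\<exists>U\<in>{G. admissible G}. \<forall>G\<in>C. G \<subseteq> U"
    proof (cases "C = {}")
      case True then show ?thesis using admissible_graph_h by blast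
    next
      case False
      have "\<And>G. G \<in> C \<Longrightarrow> admissible G" using C unfolding chains_def by blast
      moreover have "\<And>G1 G2. G1 \<in> C \<Longrightarrow> G2 \<in> C \<Longrightarrow> G1 \<subseteq> G2 \<or> G2 \<subseteq> G1"
        using C unfolding chains_def chain_subset_def by blast
      ultimately have "admissible (\<Union>C)" by (rule admissible_Union_chain[OF False])
      then show ?thesis by blast
    qed
  qed
  from Zorn_Lemma2[OF this] show ?thesis by blast
qed

theorem Hahn_Banach:
  "\<exists>F. (\<forall>x\<in>X. \<forall>y\<in>X. F (seq_add x y) = F x + F y) \<and> (\<forall>t. \<forall>x\<in>X. F (seq_scaleR t x) = t * F x)
     \<and> (\<forall>x\<in>X. F x \<le> p x) \<and> (\<forall>x\<in>Y. F x = h x)"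
proof -
  obtain M where M: "admissible M" "\<And>G. admissible G \<Longrightarrow> M \<subseteq> G \<Longrightarrow> G = M"
    using exists_maximal_admissible by blast
  note D = admissibleD[OF M(1)]
  have total: "\<exists>a. (x, a) \<in> M" if x: "x \<in> X" for x
  proof (rule ccontr)
    assume "\<nexists>a. (x, a) \<in> M"
    then obtain G' where "admissible G'" "M \<subset> G'" using admissible_extend[OF M(1) x] by blast
    then show False using M(2) by blast
  qed
  define F where "F x = (THE a. (x, a) \<in> M)" for x
  have F_eq: "F x = a" if "(x, a) \<in> M" for x a
    unfolding F_def by (rule the_equality) (use that D(1) in blast)+
  have F_graph: "(x, F x) \<in> M" if "x \<in> X" for x
    using total[OF that] F_eq by blast
  show ?thesis
  proof (intro exI[of _ F] conjI ballI allI)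
    fix x y assume "x \<in> X" "y \<in> X"
    then show "F (seq_add x y) = F x + F y" using F_eq D(4) F_graph by blast
  next
    fix t x assume "x \<in> X"
    then show "F (seq_scaleR t x) = t * F x" using F_eq D(5) F_graph by blast
  next
    fix x assume "x \<in> X" then show "F x \<le> p x" using F_graph D(6) by blast
  next
    fix x assume "x \<in> Y" then show "F x = h x" using F_eq D(3) by blast
  qed
qed

end

section \<open>FK-spaces\<close>

definition minkowski :: "seq set \<Rightarrow> seq \<Rightarrow> real" where
  "minkowski V u = Inf {t. t > 0 \<and> seq_scaleR (1 / t) u \<in> V}"

lemma minkowski_le: "t > 0 \<Longrightarrow> seq_scaleR (1 / t) u \<in> V \<Longrightarrow> minkowski V u \<le> t"
  unfolding minkowski_def by (rule cInf_lower) (auto intro: bdd_belowI[of _ 0])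

lemma minkowski_le_1: "u \<in> V \<Longrightarrow> minkowski V u \<le> 1"
  using minkowski_le[of 1 u V] by (simp add: seq_smult_def)

locale FK =
  fixes X :: "seq set" and T :: "seq topology"
  assumes FK: "FK_space X T"
begin

lemma topspace_eq [simp]: "topspace T = X"
  using FK by (simp add: FK_space_def)

lemma zero_in_X [simp]: "zero_seq \<in> X"
  and add_in_X: "x \<in> X \<Longrightarrow> y \<in> X \<Longrightarrow> seq_add x y \<in> X"
  and smult_in_X: "x \<in> X \<Longrightarrow> seq_smult c x \<in> X"
  using FK by (simp_all add: FK_space_def is_subspace_def)

lemma diff_in_X: "x \<in> X \<Longrightarrow> y \<in> X \<Longrightarrow> seq_diff x y \<in> X"
  by (simp add: seq_diff_eq_add_smult add_in_X smult_in_X)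

lemma continuous_map_add: "continuous_map (prod_topology T T) T (\<lambda>(x, y). seq_add x y)"
  and continuous_map_smult: "continuous_map (prod_topology euclidean T) T (\<lambda>(c, x). seq_smult c x)"
  and continuous_map_coord: "continuous_map T euclidean (\<lambda>x. x j)"
  and metrizable: "metrizable_space T"
  and tvs_cauchy_convergent: "tvs_cauchy T s \<Longrightarrow> \<exists>x\<in>X. limitin T s x sequentially"
  and convex_zero_nbhd: "openin T U \<Longrightarrow> zero_seq \<in> U \<Longrightarrow>
         \<exists>V. openin T V \<and> zero_seq \<in> V \<and> seq_convex V \<and> V \<subseteq> U"
  using FK by (simp_all add: FK_space_def)

lemma continuous_map_translate: "a \<in> X \<Longrightarrow> continuous_map T T (seq_add a)"
  using continuous_map_compose[OF continuous_map_pairedI[of T T "\<lambda>_. a" T id] continuous_map_add]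
  by (simp add: o_def)

lemma continuous_map_smult_const: "continuous_map T T (seq_smult c)"
  using continuous_map_compose[OF continuous_map_pairedI[of T euclidean "\<lambda>_. c" T id] continuous_map_smult]
  by (simp add: o_def)

lemma continuous_map_smult_scalar: "z \<in> X \<Longrightarrow> continuous_map euclidean T (\<lambda>c. seq_smult c z)"
  using continuous_map_compose[OF continuous_map_pairedI[of euclidean euclidean id T "\<lambda>_. z"] continuous_map_smult]
  by (simp add: o_def)

lemma continuous_map_diff: "continuous_map (prod_topology T T) T (\<lambda>(x, y). seq_diff x y)"
proof -
  have "continuous_map (prod_topology T T) T (\<lambda>xy. seq_smult (-1) (snd xy))"
    using continuous_map_compose[OF continuous_map_snd continuous_map_smult_const] by (simp add: o_def)
  then have "continuous_map (prod_topology T T) (prod_topology T T) (\<lambda>(x, y). (x, seq_smult (-1) y))"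
    by (simp add: continuous_map_pairwise case_prod_unfold o_def continuous_map_fst)
  from continuous_map_compose[OF this continuous_map_add] show ?thesis
    by (simp add: o_def seq_diff_eq_add_smult case_prod_unfold)
qed

lemma continuous_map_diff_right: "a \<in> X \<Longrightarrow> continuous_map T T (\<lambda>z. seq_diff z a)"
  using continuous_map_compose[OF continuous_map_pairedI[of T T id T "\<lambda>_. a"] continuous_map_diff]
  by (simp add: o_def)

lemma zero_nbhd_diff:
  assumes "openin T U" "zero_seq \<in> U"
  shows "\<exists>V. openin T V \<and> zero_seq \<in> V \<and> (\<forall>v\<in>V. \<forall>w\<in>V. seq_diff v w \<in> U)"
proof -
  let ?S = "{xy \<in> topspace (prod_topology T T). (\<lambda>(x, y). seq_diff x y) xy \<in> U}"
  have op: "openin (prod_topology T T) ?S"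
    by (rule openin_continuous_map_preimage[OF continuous_map_diff assms(1)])
  have mem: "(zero_seq, zero_seq) \<in> ?S" using assms seq_diff_self by simp
  obtain A B where AB: "openin T A" "openin T B" "zero_seq \<in> A" "zero_seq \<in> B" "A \<times> B \<subseteq> ?S"
    using openin_prod_topology_alt[THEN iffD1, OF op, rule_format, OF mem] by blast
  show ?thesis
  proof (intro exI[of _ "A \<inter> B"] conjI ballI)
    fix v w assume "v \<in> A \<inter> B" "w \<in> A \<inter> B"
    then have "(v, w) \<in> ?S" using AB(5) by blast
    then show "seq_diff v w \<in> U" by simp
  qed (use AB in auto)
qed

lemma closed_nbhd_inside:
  assumes "openin T W" "x \<in> W"
  obtains U C where "openin T U" "closedin T C" "x \<in> U" "U \<subseteq> C" "C \<subseteq> W"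
proof -
  have "neighbourhood_base_of (closedin T) T"
    using metrizable_imp_regular_space[OF metrizable] neighbourhood_base_of_closedin by blast
  then show ?thesis using assms that unfolding neighbourhood_base_of by meson
qed

lemma countable_zero_nbhd_base:
  obtains B :: "nat \<Rightarrow> seq set" where "\<And>k. openin T (B k)" "\<And>k. zero_seq \<in> B k"
    "\<And>U. openin T U \<Longrightarrow> zero_seq \<in> U \<Longrightarrow> \<exists>k. B k \<subseteq> U"
proof -
  obtain M d where "Metric_space M d" and T: "T = Metric_space.mtopology M d"
    using metrizable unfolding metrizable_space_def by blast
  interpret Metric_space M d by fact
  have "M = X" using T topspace_eq by simp
  show ?thesis
  proof (rule that[of "\<lambda>k. mball zero_seq (1 / Suc k)"])
    fix U assume "openin T U" "zero_seq \<in> U"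
    then obtain r where "r > 0" "mball zero_seq r \<subseteq> U"
      unfolding T openin_mtopology by blast
    moreover obtain k where "1 / Suc k < r" using nat_approx_posE[OF \<open>r > 0\<close>] by blast
    then have "mball zero_seq (1 / Suc k) \<subseteq> mball zero_seq r"
      by (intro mball_subset_concentric) auto
    ultimately show "\<exists>k. mball zero_seq (1 / Suc k) \<subseteq> U" by blast
  next
    fix k
    show "openin T (mball zero_seq (1 / Suc k))" using T by simp
    have "zero_seq \<in> M" using \<open>M = X\<close> by simp
    then show "zero_seq \<in> mball zero_seq (1 / Suc k)" by simp
  qed
qed

lemma closure_of_closed_add:
  assumes "\<And>a b. a \<in> S \<Longrightarrow> b \<in> S \<Longrightarrow> seq_add a b \<in> S"
    and "a \<in> T closure_of S" "b \<in> T closure_of S"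
  shows "seq_add a b \<in> T closure_of S"
proof -
  have "(a, b) \<in> prod_topology T T closure_of (S \<times> S)"
    using assms(2,3) by (simp add: closure_of_Times)
  then have "(\<lambda>(x, y). seq_add x y) (a, b) \<in> T closure_of ((\<lambda>(x, y). seq_add x y) ` (S \<times> S))"
    using continuous_map_image_closure_subset[OF continuous_map_add] by blast
  moreover have "(\<lambda>(x, y). seq_add x y) ` (S \<times> S) \<subseteq> S" using assms(1) by auto
  ultimately show ?thesis using closure_of_mono by fastforce
qed

lemma closure_of_closed_smult:
  assumes "\<And>a. a \<in> S \<Longrightarrow> seq_smult c a \<in> S" and "a \<in> T closure_of S"
  shows "seq_smult c a \<in> T closure_of S"
proof -
  have "seq_smult c a \<in> T closure_of (seq_smult c ` S)"
    using continuous_map_image_closure_subset[OF continuous_map_smult_const] assms(2) by blast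
  moreover have "seq_smult c ` S \<subseteq> S" using assms(1) by auto
  ultimately show ?thesis using closure_of_mono by fastforce
qed

lemma countable_zero_nbhd_diff_base:
  obtains V :: "nat \<Rightarrow> seq set" where "\<And>k. openin T (V k)" "\<And>k. zero_seq \<in> V k"
    "\<And>U. openin T U \<Longrightarrow> zero_seq \<in> U \<Longrightarrow> \<exists>k. \<forall>v\<in>V k. \<forall>w\<in>V k. seq_diff v w \<in> U"
proof -
  obtain B :: "nat \<Rightarrow> seq set" where B: "\<And>k. openin T (B k)" "\<And>k. zero_seq \<in> B k"
    "\<And>U. openin T U \<Longrightarrow> zero_seq \<in> U \<Longrightarrow> \<exists>k. B k \<subseteq> U"
    using countable_zero_nbhd_base by blast
  have "\<forall>k. \<exists>V. openin T V \<and> zero_seq \<in> V \<and> (\<forall>v\<in>V. \<forall>w\<in>V. seq_diff v w \<in> B k)"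
    using zero_nbhd_diff[OF B(1) B(2)] by blast
  then obtain V where V: "\<forall>k. openin T (V k) \<and> zero_seq \<in> V k \<and> (\<forall>v\<in>V k. \<forall>w\<in>V k. seq_diff v w \<in> B k)"
    by metis
  show ?thesis
  proof (rule that)
    fix U assume "openin T U" "zero_seq \<in> U"
    then obtain k where "B k \<subseteq> U" using B(3) by blast
    then show "\<exists>k. \<forall>v\<in>V k. \<forall>w\<in>V k. seq_diff v w \<in> U" using V by blast
  qed (use V in auto)
qed

section \<open>Baire category and uniform boundedness\<close>

lemma tvs_cauchyI_nested:
  assumes "\<And>n. y n \<in> X"
    and V: "\<And>U. openin T U \<Longrightarrow> zero_seq \<in> U \<Longrightarrow> \<exists>k. \<forall>v\<in>V k. \<forall>w\<in>V k. seq_diff v w \<in> U"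
    and nested: "\<And>m n. n \<le> m \<Longrightarrow> seq_diff (y m) (y n) \<in> V n"
  shows "tvs_cauchy T y"
  unfolding tvs_cauchy_def
proof (intro conjI allI impI)
  fix U assume "openin T U \<and> zero_seq \<in> U"
  then obtain k where k: "\<forall>v\<in>V k. \<forall>w\<in>V k. seq_diff v w \<in> U" using V by blast
  have "seq_diff (y m) (y n) \<in> U" if "k \<le> m" "k \<le> n" for m n
  proof -
    have "seq_diff (seq_diff (y m) (y k)) (seq_diff (y n) (y k)) \<in> U"
      using k nested that by blast
    moreover have "seq_diff (seq_diff (y m) (y k)) (seq_diff (y n) (y k)) = seq_diff (y m) (y n)"
      by (simp add: seq_diff_def)
    ultimately show ?thesis by simp
  qed
  then show "\<exists>N. \<forall>m\<ge>N. \<forall>n\<ge>N. seq_diff (y m) (y n) \<in> U" by blast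
qed (use assms(1) in simp)

lemma Baire_shrink_step:
  assumes E: "closedin T E"
    and meagre: "\<And>G. openin T G \<Longrightarrow> G \<inter> Y \<noteq> {} \<Longrightarrow> \<not> G \<inter> Y \<subseteq> E"
    and G: "openin T G" "y \<in> G" "y \<in> Y" and V: "openin T V" "zero_seq \<in> V"
  shows "\<exists>N C z. openin T N \<and> closedin T C \<and> z \<in> N \<and> z \<in> Y \<and> N \<inter> E = {} \<and> N \<subseteq> C \<and> C \<subseteq> G
    \<and> (\<forall>w\<in>C. seq_diff w y \<in> V)"
proof -
  have yX: "y \<in> X" using openin_subset[OF G(1)] G(2) by auto
  define W where "W = G \<inter> {w \<in> topspace T. seq_diff w y \<in> V}"
  have "openin T W" unfolding W_def
    by (intro openin_Int G(1) openin_continuous_map_preimage[OF continuous_map_diff_right[OF yX] V(1)])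
  moreover have "y \<in> W" unfolding W_def using G(2) yX V(2) seq_diff_self by simp
  ultimately obtain U C where UC: "openin T U" "closedin T C" "y \<in> U" "U \<subseteq> C" "C \<subseteq> W"
    by (rule closed_nbhd_inside)
  have "U \<inter> Y \<noteq> {}" using UC(3) G(3) by blast
  then obtain z where z: "z \<in> U" "z \<in> Y" "z \<notin> E" using meagre[OF UC(1)] by blast
  show ?thesis
  proof (intro exI conjI)
    show "openin T (U - E)" using UC(1) E by (simp add: openin_diff)
    show "\<forall>w\<in>C. seq_diff w y \<in> V" using UC(5) unfolding W_def by blast
    show "C \<subseteq> G" using UC(5) unfolding W_def by blast
  qed (use UC z in auto)
qed

text \<open>If no \<open>E m\<close> contains a relatively open part of \<open>Y\<close>, one finds points \<open>y n\<close> in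
  shrinking open sets \<open>G n\<close> avoiding \<open>E n\<close>; the closed sets \<open>C n\<close> squeezed between them keep
  the limit of \<open>y\<close> inside every \<open>G n\<close>, and the neighbourhoods \<open>V n\<close> make \<open>y\<close> Cauchy.\<close>

lemma Baire_nested_sequence:
  fixes E V :: "nat \<Rightarrow> seq set"
  assumes Y: "Y \<noteq> {}" "Y \<subseteq> X" and E: "\<And>m. closedin T (E m)"
    and not_Baire: "\<not> (\<exists>m G. openin T G \<and> G \<inter> Y \<noteq> {} \<and> G \<inter> Y \<subseteq> E m)"
    and V: "\<And>k. openin T (V k)" "\<And>k. zero_seq \<in> V k"
  shows "\<exists>y G C. (\<forall>n. y n \<in> G n \<and> y n \<in> Y \<and> G n \<inter> E n = {}) \<and>
    (\<forall>n. closedin T (C n) \<and> G (Suc n) \<subseteq> C n \<and> C n \<subseteq> G n \<and> (\<forall>w\<in>C n. seq_diff w (y n) \<in> V n))"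
proof -
  have meagre: "\<And>m G. openin T G \<Longrightarrow> G \<inter> Y \<noteq> {} \<Longrightarrow> \<not> G \<inter> Y \<subseteq> E m"
    using not_Baire by blast
  define P where "P n s \<longleftrightarrow> openin T (snd s) \<and> fst s \<in> snd s \<and> fst s \<in> Y \<and> snd s \<inter> E n = {}"
    for n and s :: "seq \<times> seq set"
  define Q where "Q n s s' \<longleftrightarrow> (\<exists>C. closedin T C \<and> snd s' \<subseteq> C \<and> C \<subseteq> snd s \<and>
       (\<forall>w\<in>C. seq_diff w (fst s) \<in> V n))" for n and s s' :: "seq \<times> seq set"
  have "\<exists>s. \<forall>n. P n (s n) \<and> Q n (s n) (s (Suc n))"
  proof (rule dependent_nat_choice)
    obtain y where y: "y \<in> Y" using Y(1) by blast
    have XT: "openin T X" using openin_topspace[of T] by simp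
    obtain N z where "openin T N" "z \<in> N" "z \<in> Y" "N \<inter> E 0 = {}"
      using Baire_shrink_step[OF E[of 0] meagre[of _ 0] XT _ y XT zero_in_X] y Y(2) by blast
    then have "P 0 (z, N)" unfolding P_def by simp
    then show "\<exists>s. P 0 s" by blast
  next
    fix s n assume "P n s"
    then have s: "openin T (snd s)" "fst s \<in> snd s" "fst s \<in> Y" unfolding P_def by auto
    obtain N C z where "openin T N" "closedin T C" "z \<in> N" "z \<in> Y" "N \<inter> E (Suc n) = {}" "N \<subseteq> C"
      "C \<subseteq> snd s" "\<forall>w\<in>C. seq_diff w (fst s) \<in> V n"
      using Baire_shrink_step[OF E[of "Suc n"] meagre[of _ "Suc n"] s V(1)[of n] V(2)[of n]] by blast
    then have "P (Suc n) (z, N)" "Q n s (z, N)" unfolding P_def Q_def by auto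
    then show "\<exists>s'. P (Suc n) s' \<and> Q n s s'" by blast
  qed
  then obtain s where s: "\<And>n. P n (s n)" "\<And>n. Q n (s n) (s (Suc n))" by blast
  then have "\<forall>n. \<exists>C. closedin T C \<and> snd (s (Suc n)) \<subseteq> C \<and> C \<subseteq> snd (s n) \<and>
      (\<forall>w\<in>C. seq_diff w (fst (s n)) \<in> V n)"
    unfolding Q_def by blast
  then obtain C where "\<forall>n. closedin T (C n) \<and> snd (s (Suc n)) \<subseteq> C n \<and> C n \<subseteq> snd (s n) \<and>
      (\<forall>w\<in>C n. seq_diff w (fst (s n)) \<in> V n)"
    by metis
  moreover have "\<forall>n. fst (s n) \<in> snd (s n) \<and> fst (s n) \<in> Y \<and> snd (s n) \<inter> E n = {}"
    using s(1) unfolding P_def by blast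
  ultimately show ?thesis
    by (intro exI[of _ "\<lambda>n. fst (s n)"] exI[of _ "\<lambda>n. snd (s n)"] exI[of _ C] conjI) simp_all
qed

lemma Baire:
  fixes E :: "nat \<Rightarrow> seq set"
  assumes Y: "closedin T Y" "Y \<noteq> {}" and E: "\<And>m. closedin T (E m)" and cover: "Y \<subseteq> (\<Union>m. E m)"
  shows "\<exists>m G. openin T G \<and> G \<inter> Y \<noteq> {} \<and> G \<inter> Y \<subseteq> E m"
proof (rule ccontr)
  assume not_Baire: "\<not> ?thesis"
  have YX: "Y \<subseteq> X" using closedin_subset[OF Y(1)] by simp
  obtain V :: "nat \<Rightarrow> seq set" where V: "\<And>k. openin T (V k)" "\<And>k. zero_seq \<in> V k"
    "\<And>U. openin T U \<Longrightarrow> zero_seq \<in> U \<Longrightarrow> \<exists>k. \<forall>v\<in>V k. \<forall>w\<in>V k. seq_diff v w \<in> U"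
    using countable_zero_nbhd_diff_base by blast
  from Baire_nested_sequence[where V = V, OF Y(2) YX E not_Baire V(1,2)] obtain y G C where
    G: "\<forall>n. y n \<in> G n \<and> y n \<in> Y \<and> G n \<inter> E n = {}" and
    C: "\<forall>n. closedin T (C n) \<and> G (Suc n) \<subseteq> C n \<and> C n \<subseteq> G n \<and> (\<forall>w\<in>C n. seq_diff w (y n) \<in> V n)"
    by (elim exE conjE)
  have y_G: "y n \<in> G n" and y_Y: "y n \<in> Y" and G_E: "G n \<inter> E n = {}" for n
    using G by simp_all
  have C_closed: "closedin T (C n)" and G_C: "G (Suc n) \<subseteq> C n" and C_G: "C n \<subseteq> G n"
    and C_V: "\<And>w. w \<in> C n \<Longrightarrow> seq_diff w (y n) \<in> V n" for n
    using C by simp_all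
  have G_decreasing: "G m \<subseteq> G n" if "n \<le> m" for m n
    using that
  proof (induction m rule: dec_induct)
    case (step m) then show ?case using G_C[of m] C_G[of m] by blast
  qed simp
  have y_in_C: "y m \<in> C n" if "n < m" for m n
    using G_decreasing[of "Suc n" m] that y_G[of m] G_C[of n] by auto
  have "tvs_cauchy T y"
  proof (rule tvs_cauchyI_nested[OF _ V(3)])
    show "y n \<in> X" for n using y_Y YX by blast
    show "seq_diff (y m) (y n) \<in> V n" if "n \<le> m" for m n
    proof (cases "n = m")
      case True then show ?thesis using V(2) by (simp add: seq_diff_self)
    next
      case False then show ?thesis using that y_in_C[of n m] C_V by simp
    qed
  qed
  then obtain l where l: "limitin T y l sequentially" using tvs_cauchy_convergent by blast
  have "l \<in> Y"
    by (rule limitin_closedin[OF l Y(1)]) (use y_Y in auto)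
  moreover have "l \<in> C n" for n
  proof (rule limitin_closedin[OF l C_closed])
    show "\<forall>\<^sub>F m in sequentially. y m \<in> C n"
      unfolding eventually_sequentially using y_in_C by (intro exI[of _ "Suc n"]) auto
  qed auto
  then have "l \<notin> E n" for n using C_G[of n] G_E[of n] by blast
  ultimately show False using cover by blast
qed

lemma continuous_map_sigma_mean: "continuous_map T euclidean (\<lambda>z. sigma_mean p q z y n)"
proof -
  have coord: "((\<lambda>z. z j) \<longlongrightarrow> x j) (atin T x)" if "x \<in> X" for x j
    using continuous_map_coord[of j] that by (simp add: continuous_map_atin)
  show ?thesis
    unfolding sigma_mean_def divide_inverse continuous_map_atin
    by (auto intro!: tendsto_mult_right tendsto_sum coord)
qed

lemma uniform_boundedness:
  fixes \<phi> :: "nat \<Rightarrow> seq \<Rightarrow> complex"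
  assumes Y: "closedin T Y" "zero_seq \<in> Y" "\<And>a b. a \<in> Y \<Longrightarrow> b \<in> Y \<Longrightarrow> seq_add a b \<in> Y"
    and cont: "\<And>n. continuous_map T euclidean (\<phi> n)"
    and add: "\<And>n a b. a \<in> Y \<Longrightarrow> b \<in> Y \<Longrightarrow> \<phi> n (seq_add a b) = \<phi> n a + \<phi> n b"
    and bounded: "\<And>z. z \<in> Y \<Longrightarrow> \<exists>K. \<forall>n. cmod (\<phi> n z) \<le> K"
  shows "\<exists>U K. openin T U \<and> zero_seq \<in> U \<and> (\<forall>u\<in>U \<inter> Y. \<forall>n. cmod (\<phi> n u) \<le> K)"
proof -
  define E where "E m = (\<Inter>n. {z \<in> topspace T. \<phi> n z \<in> cball 0 (real m)})" for m :: nat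
  have E_closed: "closedin T (E m)" for m
    unfolding E_def by (intro closedin_INT closedin_continuous_map_preimage[OF cont]) auto
  have cover: "Y \<subseteq> (\<Union>m. E m)"
  proof
    fix z assume z: "z \<in> Y"
    obtain K where "\<forall>n. cmod (\<phi> n z) \<le> K" using bounded[OF z] by blast
    then have "cmod (\<phi> n z) \<le> real (nat \<lceil>K\<rceil>)" for n
      using real_nat_ceiling_ge[of K] order_trans by blast
    moreover have "z \<in> X" using closedin_subset[OF Y(1)] z by auto
    ultimately have "z \<in> E (nat \<lceil>K\<rceil>)" unfolding E_def by simp
    then show "z \<in> (\<Union>m. E m)" by blast
  qed
  have "Y \<noteq> {}" using Y(2) by blast
  then obtain m G where G: "openin T G" "G \<inter> Y \<noteq> {}" "G \<inter> Y \<subseteq> E m"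
    using Baire[OF Y(1) _ E_closed cover] by blast
  then obtain z0 where z0: "z0 \<in> G" "z0 \<in> Y" by blast
  have z0X: "z0 \<in> X" using closedin_subset[OF Y(1)] z0(2) by auto
  define U where "U = {u \<in> topspace T. seq_add z0 u \<in> G}"
  have "seq_add z0 zero_seq = z0" by (simp add: seq_add_def zero_seq_def)
  then have "zero_seq \<in> U" unfolding U_def using z0(1) by simp
  moreover have "openin T U" unfolding U_def
    by (rule openin_continuous_map_preimage[OF continuous_map_translate[OF z0X] G(1)])
  moreover have "cmod (\<phi> n u) \<le> 2 * real m" if "u \<in> U" "u \<in> Y" for u n
  proof -
    have "seq_add z0 u \<in> G" using that(1) unfolding U_def by simp
    then have "seq_add z0 u \<in> E m" "z0 \<in> E m"
      using z0 G(3) Y(3)[OF z0(2) that(2)] by blast+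
    then have "cmod (\<phi> n (seq_add z0 u)) \<le> real m" "cmod (\<phi> n z0) \<le> real m"
      unfolding E_def by auto
    moreover have "\<phi> n u = \<phi> n (seq_add z0 u) - \<phi> n z0" using add[OF z0(2) that(2)] by simp
    ultimately show ?thesis using norm_triangle_ineq4[of "\<phi> n (seq_add z0 u)" "\<phi> n z0"] by simp
  qed
  ultimately show ?thesis by blast
qed

lemma sigma_limit_bounded_near_zero:
  assumes Y: "closedin T Y" "zero_seq \<in> Y" "\<And>a b. a \<in> Y \<Longrightarrow> b \<in> Y \<Longrightarrow> seq_add a b \<in> Y"
    and g_lim: "\<And>z. z \<in> Y \<Longrightarrow> sigma_mean p q z y \<longlonglongrightarrow> g z"
  shows "\<exists>V C. openin T V \<and> zero_seq \<in> V \<and> seq_convex V \<and> 0 < C \<and> (\<forall>u\<in>V \<inter> Y. cmod (g u) \<le> C)"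
proof -
  have bounded: "\<exists>K. \<forall>n. cmod (sigma_mean p q z y n) \<le> K" if "z \<in> Y" for z
    using convergent_imp_Bseq[OF convergentI[OF g_lim[OF that]]] unfolding Bseq_def by blast
  obtain U K where U: "openin T U" "zero_seq \<in> U" "\<forall>u\<in>U \<inter> Y. \<forall>n. cmod (sigma_mean p q u y n) \<le> K"
    using uniform_boundedness[where \<phi> = "\<lambda>n z. sigma_mean p q z y n", OF Y continuous_map_sigma_mean
        sigma_mean_add bounded]
    by blast
  obtain V where V: "openin T V" "zero_seq \<in> V" "seq_convex V" "V \<subseteq> U"
    using convex_zero_nbhd[OF U(1,2)] by blast
  have "cmod (g u) \<le> \<bar>K\<bar> + 1" if "u \<in> V \<inter> Y" for u
  proof (rule LIMSEQ_le_const2[OF tendsto_norm[OF g_lim]])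
    have "u \<in> U \<inter> Y" using V(4) that by blast
    with U(3) have "\<forall>n. cmod (sigma_mean p q u y n) \<le> K" by (rule bspec)
    then have "cmod (sigma_mean p q u y n) \<le> \<bar>K\<bar> + 1" for n
      using abs_ge_self[of K] by (metis add_increasing2 order_trans zero_le_one)
    then show "\<exists>N. \<forall>n\<ge>N. cmod (sigma_mean p q u y n) \<le> \<bar>K\<bar> + 1" by blast
  qed (use that in blast)
  moreover have "0 < \<bar>K\<bar> + 1" using abs_ge_zero[of K] by linarith
  ultimately show ?thesis using V(1-3) by blast
qed

section \<open>Extending functionals bounded near zero\<close>

context
  fixes V assumes V: "openin T V" "zero_seq \<in> V"
begin

lemma absorbing: "u \<in> X \<Longrightarrow> \<exists>t>0. seq_scaleR (1 / t) u \<in> V"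
proof -
  assume "u \<in> X"
  have "openin euclidean {c \<in> topspace euclidean. seq_smult c u \<in> V}"
    by (rule openin_continuous_map_preimage[OF continuous_map_smult_scalar[OF \<open>u \<in> X\<close>] V(1)])
  then have "open {c. seq_smult c u \<in> V}" by simp
  moreover have "0 \<in> {c. seq_smult c u \<in> V}"
    using V(2) by (simp add: seq_smult_def zero_seq_def)
  ultimately obtain e where e: "e > 0" "ball 0 e \<subseteq> {c. seq_smult c u \<in> V}"
    using open_contains_ball by blast
  have "complex_of_real (1 / (2 / e)) \<in> ball 0 e" using e(1) by simp
  then have "seq_scaleR (1 / (2 / e)) u \<in> V" using e(2) by blast
  then show ?thesis using e(1) by (intro exI[of _ "2 / e"]) simp
qed

lemma minkowski_greatest:
  assumes "u \<in> X" "\<And>t. t > 0 \<Longrightarrow> seq_scaleR (1 / t) u \<in> V \<Longrightarrow> b \<le> t"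
  shows "b \<le> minkowski V u"
  unfolding minkowski_def using absorbing[OF assms(1)] assms(2) by (intro cInf_greatest) auto

lemma minkowski_scaleR:
  assumes "u \<in> X" "t > 0"
  shows "minkowski V (seq_scaleR t u) = t * minkowski V u"
proof (rule antisym)
  have "minkowski V (seq_scaleR t u) / t \<le> minkowski V u"
  proof (rule minkowski_greatest[OF assms(1)])
    fix s assume "s > 0" "seq_scaleR (1 / s) u \<in> V"
    moreover have "seq_scaleR (1 / (t * s)) (seq_scaleR t u) = seq_scaleR (1 / s) u"
      using assms(2) by (intro ext) (simp add: seq_smult_def)
    ultimately have "minkowski V (seq_scaleR t u) \<le> t * s"
      using assms(2) by (intro minkowski_le) simp_all
    then show "minkowski V (seq_scaleR t u) / t \<le> s" using assms(2) by (simp add: field_simps)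
  qed
  then show "minkowski V (seq_scaleR t u) \<le> t * minkowski V u" using assms(2) by (simp add: field_simps)
next
  show "t * minkowski V u \<le> minkowski V (seq_scaleR t u)"
  proof (rule minkowski_greatest[OF smult_in_X[OF assms(1)]])
    fix r assume "r > 0" "seq_scaleR (1 / r) (seq_scaleR t u) \<in> V"
    moreover have "seq_scaleR (1 / (r / t)) u = seq_scaleR (1 / r) (seq_scaleR t u)"
      using assms(2) by (intro ext) (simp add: seq_smult_def)
    ultimately have "minkowski V u \<le> r / t"
      using assms(2) by (intro minkowski_le) simp_all
    then show "t * minkowski V u \<le> r" using assms(2) by (simp add: field_simps)
  qed
qed

lemma minkowski_add:
  assumes "seq_convex V" "u \<in> X" "w \<in> X"
  shows "minkowski V (seq_add u w) \<le> minkowski V u + minkowski V w"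
proof -
  have sum: "minkowski V (seq_add u w) \<le> s + t"
    if s: "s > 0" "seq_scaleR (1 / s) u \<in> V" and t: "t > 0" "seq_scaleR (1 / t) w \<in> V" for s t
  proof (rule minkowski_le)
    define l where "l = s / (s + t)"
    have "0 \<le> l" "l \<le> 1" "1 - l = t / (s + t)" unfolding l_def using s t by (auto simp: field_simps)
    moreover have "seq_add (seq_scaleR l (seq_scaleR (1 / s) u)) (seq_scaleR (1 - l) (seq_scaleR (1 / t) w))
        = seq_scaleR (1 / (s + t)) (seq_add u w)"
      unfolding l_def using s t
      by (intro ext) (simp add: seq_add_def seq_smult_def field_simps add_divide_distrib)
    moreover have "seq_add (seq_scaleR l (seq_scaleR (1 / s) u)) (seq_scaleR (1 - l) (seq_scaleR (1 / t) w)) \<in> V"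
      using assms(1) s(2) t(2) \<open>0 \<le> l\<close> \<open>l \<le> 1\<close> unfolding seq_convex_def by blast
    ultimately show "seq_scaleR (1 / (s + t)) (seq_add u w) \<in> V" by simp
  qed (use s t in simp)
  have "minkowski V (seq_add u w) - t \<le> minkowski V u"
    if "t > 0" "seq_scaleR (1 / t) w \<in> V" for t
    using sum[OF _ _ that] by (intro minkowski_greatest[OF assms(2)]) (simp add: algebra_simps)
  then have "minkowski V (seq_add u w) - minkowski V u \<le> minkowski V w"
    by (intro minkowski_greatest[OF assms(3)]) (simp add: algebra_simps)
  then show ?thesis by simp
qed

end

lemma continuous_map_if_bounded_near_zero:
  assumes f_add: "\<And>x y. x \<in> X \<Longrightarrow> y \<in> X \<Longrightarrow> f (seq_add x y) = f x + f y"
    and f_scaleR: "\<And>t x. x \<in> X \<Longrightarrow> f (seq_scaleR t x) = complex_of_real t * f x"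
    and W: "openin T W" "zero_seq \<in> W" and bound: "\<And>u. u \<in> W \<Longrightarrow> cmod (f u) \<le> K"
  shows "continuous_map T euclidean f"
  unfolding continuous_map_def
proof (intro conjI allI impI)
  show "f \<in> topspace T \<rightarrow> topspace euclidean" by simp
  fix U :: "complex set" assume "openin euclidean U"
  show "openin T {x \<in> topspace T. f x \<in> U}"
  proof (subst openin_subopen, intro ballI)
    fix x assume x: "x \<in> {x \<in> topspace T. f x \<in> U}"
    then have xX: "x \<in> X" by simp
    obtain e where e: "e > 0" "ball (f x) e \<subseteq> U"
      using \<open>openin euclidean U\<close> x open_contains_ball by force
    define r where "r = 2 * (max K 0 + 1) / e"
    have "r > 0" "e * r = 2 * (max K 0 + 1)" unfolding r_def using e(1) by auto
    then have r: "r > 0" "K / r < e" by (auto simp: pos_divide_less_eq)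
    define N where "N = {z \<in> topspace T. seq_scaleR r (seq_diff z x) \<in> W}"
    have "openin T N" unfolding N_def
      by (rule openin_continuous_map_preimage[OF continuous_map_compose[OF
            continuous_map_diff_right[OF xX] continuous_map_smult_const, unfolded o_def] W(1)])
    moreover have "x \<in> N" unfolding N_def using xX W(2) by (simp add: seq_diff_self seq_smult_zero)
    moreover have "N \<subseteq> {x \<in> topspace T. f x \<in> U}"
    proof
      fix z assume "z \<in> N"
      then have zX: "z \<in> X" and zW: "seq_scaleR r (seq_diff z x) \<in> W" unfolding N_def by auto
      have dX: "seq_diff z x \<in> X" using zX xX diff_in_X by blast
      have "seq_add x (seq_diff z x) = z" by (simp add: seq_add_def seq_diff_def)
      then have fz: "f z = f x + f (seq_diff z x)" using f_add[OF xX dX] by simp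
      have "r * cmod (f (seq_diff z x)) \<le> K"
        using bound[OF zW] f_scaleR[OF dX, of r] r(1) by (simp add: norm_mult)
      then have "cmod (f (seq_diff z x)) \<le> K / r" using r(1) by (simp add: pos_le_divide_eq mult.commute)
      then have "cmod (f (seq_diff z x)) < e" using r(2) by linarith
      then have "f z \<in> ball (f x) e" using fz by (simp add: dist_norm)
      then show "z \<in> {x \<in> topspace T. f x \<in> U}" using e zX by auto
    qed
    ultimately show "\<exists>N. openin T N \<and> x \<in> N \<and> N \<subseteq> {x \<in> topspace T. f x \<in> U}" by blast
  qed
qed

text \<open>A real-linear \<open>F\<close> is the real part of the complex-linear \<open>z \<mapsto> F z - i F (i z)\<close>.\<close>

lemma complexification_linear:
  assumes F_add: "\<And>x y. x \<in> X \<Longrightarrow> y \<in> X \<Longrightarrow> F (seq_add x y) = F x + F y"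
    and F_scaleR: "\<And>t x. x \<in> X \<Longrightarrow> F (seq_scaleR t x) = t * F x"
    and f_def: "\<And>z. f z = complex_of_real (F z) - \<i> * complex_of_real (F (seq_smult \<i> z))"
  shows "\<And>x y. x \<in> X \<Longrightarrow> y \<in> X \<Longrightarrow> f (seq_add x y) = f x + f y"
    and "\<And>c x. x \<in> X \<Longrightarrow> f (seq_smult c x) = c * f x"
proof -
  fix x y assume "x \<in> X" "y \<in> X"
  moreover have "seq_smult \<i> (seq_add x y) = seq_add (seq_smult \<i> x) (seq_smult \<i> y)"
    by (intro ext) (simp add: seq_smult_def seq_add_def algebra_simps)
  ultimately show "f (seq_add x y) = f x + f y"
    unfolding f_def using F_add smult_in_X by (simp add: algebra_simps)
next
  fix c x assume xX: "x \<in> X"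
  have ixX: "seq_smult \<i> x \<in> X" using smult_in_X xX by blast
  have "seq_smult c x = seq_add (seq_scaleR (Re c) x) (seq_scaleR (Im c) (seq_smult \<i> x))"
    by (intro ext) (simp add: seq_smult_def seq_add_def algebra_simps complex_eq_iff)
  then have F1: "F (seq_smult c x) = Re c * F x + Im c * F (seq_smult \<i> x)"
    using F_add F_scaleR smult_in_X xX ixX by simp
  have "seq_smult \<i> (seq_smult c x) = seq_add (seq_scaleR (Re c) (seq_smult \<i> x)) (seq_scaleR (- Im c) x)"
    by (intro ext) (simp add: seq_smult_def seq_add_def algebra_simps complex_eq_iff)
  then have "F (seq_smult \<i> (seq_smult c x)) = F (seq_scaleR (Re c) (seq_smult \<i> x)) + F (seq_scaleR (- Im c) x)"
    using F_add smult_in_X ixX xX by simp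
  also have "\<dots> = Re c * F (seq_smult \<i> x) - Im c * F x"
    by (simp only: F_scaleR[OF ixX] F_scaleR[OF xX])
  finally show "f (seq_smult c x) = c * f x"
    unfolding f_def F1 by (simp add: complex_eq_iff algebra_simps)
qed

lemma complexification_bounded_near_zero:
  assumes F_scaleR: "\<And>t x. x \<in> X \<Longrightarrow> F (seq_scaleR t x) = t * F x"
    and F_le: "\<And>x. x \<in> X \<Longrightarrow> F x \<le> C * minkowski V x" and "C \<ge> 0"
    and V: "openin T V" "zero_seq \<in> V"
  shows "\<exists>W. openin T W \<and> zero_seq \<in> W \<and>
           (\<forall>u\<in>W. cmod (complex_of_real (F u) - \<i> * complex_of_real (F (seq_smult \<i> u))) \<le> 2 * C)"
proof -
  have VX: "V \<subseteq> X" using openin_subset[OF V(1)] by simp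
  have F_le_C: "F u \<le> C" if "u \<in> V" for u
    using F_le[of u] VX that minkowski_le_1[OF that] \<open>C \<ge> 0\<close> mult_left_le[of _ C] by fastforce
  have F_abs: "\<bar>F u\<bar> \<le> C" if "u \<in> V" "seq_smult (-1) u \<in> V" for u
    using F_le_C[OF that(1)] F_le_C[OF that(2)] F_scaleR[of u "-1"] VX that(1) by auto
  define W where "W = {u \<in> topspace T. u \<in> V} \<inter> {u \<in> topspace T. seq_smult (-1) u \<in> V}
     \<inter> {u \<in> topspace T. seq_smult \<i> u \<in> V} \<inter> {u \<in> topspace T. seq_smult (- \<i>) u \<in> V}"
  have "openin T W" unfolding W_def
    by (intro openin_Int openin_continuous_map_preimage[OF continuous_map_smult_const V(1)]
        openin_continuous_map_preimage[OF continuous_map_id V(1), unfolded id_def])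
  moreover have "zero_seq \<in> W" unfolding W_def using V(2) by (simp add: seq_smult_zero)
  moreover have "cmod (complex_of_real (F u) - \<i> * complex_of_real (F (seq_smult \<i> u))) \<le> 2 * C"
    if "u \<in> W" for u
  proof -
    have u: "u \<in> V" "seq_smult (-1) u \<in> V" "seq_smult \<i> u \<in> V" "seq_smult (- \<i>) u \<in> V"
      using that unfolding W_def by auto
    have "seq_smult (-1) (seq_smult \<i> u) = seq_smult (- \<i>) u" by (simp add: seq_smult_def)
    then have "\<bar>F (seq_smult \<i> u)\<bar> \<le> C" using F_abs[OF u(3)] u(4) by simp
    moreover have "\<bar>F u\<bar> \<le> C" using F_abs u by blast
    moreover have "cmod (complex_of_real (F u) - \<i> * complex_of_real (F (seq_smult \<i> u)))
        \<le> cmod (complex_of_real (F u)) + cmod (\<i> * complex_of_real (F (seq_smult \<i> u)))"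
      by (rule norm_triangle_ineq4)
    ultimately show ?thesis by (simp add: norm_mult)
  qed
  ultimately show ?thesis by blast
qed

lemma bounded_functional_extends:
  assumes Y: "Y \<subseteq> X" "zero_seq \<in> Y" "\<And>a b. a \<in> Y \<Longrightarrow> b \<in> Y \<Longrightarrow> seq_add a b \<in> Y"
      "\<And>c a. a \<in> Y \<Longrightarrow> seq_smult c a \<in> Y"
    and g_add: "\<And>a b. a \<in> Y \<Longrightarrow> b \<in> Y \<Longrightarrow> g (seq_add a b) = g a + g b"
    and g_smult: "\<And>c a. a \<in> Y \<Longrightarrow> g (seq_smult c a) = c * g a"
    and V: "openin T V" "zero_seq \<in> V" "seq_convex V"
    and "C > 0" and bound: "\<And>u. u \<in> V \<Longrightarrow> u \<in> Y \<Longrightarrow> cmod (g u) \<le> C"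
  shows "\<exists>f\<in>cdual X T. \<forall>z\<in>Y. f z = g z"
proof -
  have Re_g_le: "Re (g u) \<le> C * minkowski V u" if "u \<in> Y" for u
  proof -
    have "Re (g u) / C \<le> minkowski V u"
    proof (rule minkowski_greatest[OF V(1,2)])
      show "u \<in> X" using that Y(1) by blast
      fix s assume s: "s > 0" "seq_scaleR (1 / s) u \<in> V"
      have "cmod (g u) / s = cmod (g (seq_scaleR (1 / s) u))"
        using g_smult[OF that] s(1) by (simp add: norm_mult norm_divide)
      also have "\<dots> \<le> C" using bound[OF s(2) Y(4)[OF that]] .
      finally have "Re (g u) \<le> C * s"
        using s(1) complex_Re_le_cmod[of "g u"] by (simp add: divide_le_eq)
      then show "Re (g u) / C \<le> s" using \<open>C > 0\<close> by (simp add: divide_le_eq mult.commute)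
    qed
    then show ?thesis using \<open>C > 0\<close> by (simp add: divide_le_eq mult.commute)
  qed
  interpret sublinear_extension X Y "\<lambda>u. C * minkowski V u" "\<lambda>u. Re (g u)"
  proof
    show "\<And>x y. x \<in> X \<Longrightarrow> y \<in> X \<Longrightarrow> C * minkowski V (seq_add x y) \<le> C * minkowski V x + C * minkowski V y"
      using minkowski_add[OF V] \<open>C > 0\<close> by (simp add: distrib_left[symmetric])
    show "\<And>x t. x \<in> X \<Longrightarrow> 0 < t \<Longrightarrow> C * minkowski V (seq_scaleR t x) = t * (C * minkowski V x)"
      using minkowski_scaleR[OF V(1,2)] by simp
  qed (use Y add_in_X smult_in_X g_add g_smult Re_g_le in auto)
  obtain F where F_add: "\<And>x y. x \<in> X \<Longrightarrow> y \<in> X \<Longrightarrow> F (seq_add x y) = F x + F y"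
    and F_scaleR: "\<And>t x. x \<in> X \<Longrightarrow> F (seq_scaleR t x) = t * F x"
    and F_le: "\<And>x. x \<in> X \<Longrightarrow> F x \<le> C * minkowski V x" and F_Y: "\<And>x. x \<in> Y \<Longrightarrow> F x = Re (g x)"
    using Hahn_Banach by blast
  define f where "f z = complex_of_real (F z) - \<i> * complex_of_real (F (seq_smult \<i> z))" for z
  note f_linear = complexification_linear[where f = f, OF F_add F_scaleR f_def]
  obtain W where W: "openin T W" "zero_seq \<in> W" "\<And>u. u \<in> W \<Longrightarrow> cmod (f u) \<le> 2 * C"
    using complexification_bounded_near_zero[OF F_scaleR F_le _ V(1,2)] \<open>C > 0\<close> unfolding f_def by auto
  have "continuous_map T euclidean f"
    using continuous_map_if_bounded_near_zero[OF f_linear W] .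
  then have "f \<in> cdual X T" unfolding cdual_def using f_linear by blast
  moreover have "f z = g z" if "z \<in> Y" for z
    using F_Y[OF that] F_Y[OF Y(4)[OF that]] g_smult[OF that, of \<i>] unfolding f_def
    by (simp add: complex_eq_iff)
  ultimately show ?thesis by blast
qed

lemma sigma_mean_delta_tendsto:
  assumes "limitin T (avg_section p q (delta j)) (delta j) sequentially"
  shows "sigma_mean p q (delta j) y \<longlonglongrightarrow> y j"
proof -
  have "(\<lambda>n. avg_section p q (delta j) n j) \<longlonglongrightarrow> 1"
    using continuous_map_limit[OF continuous_map_coord assms, of j] by (simp add: o_def delta_def)
  from tendsto_mult_left[OF this, of "y j"] show ?thesis
    unfolding sigma_mean_delta[abs_def] by simp
qed

lemma exists_cdual_with_coeffs:
  assumes "phi \<subseteq> X" and sigma_K: "has_sigma_K p q T (T closure_of phi)"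
    and y: "y \<in> d_dual p q (T closure_of phi)"
  shows "\<exists>f\<in>cdual X T. \<forall>j. f (delta j) = y j"
proof -
  define Y where "Y = T closure_of phi"
  have Y_closed: "closedin T Y" and YX: "Y \<subseteq> X" and phiY: "phi \<subseteq> Y"
    unfolding Y_def using closure_of_subset[of phi T] \<open>phi \<subseteq> X\<close> closure_of_subset_topspace[of T phi]
    by auto
  have Y_add: "seq_add a b \<in> Y" if "a \<in> Y" "b \<in> Y" for a b
    using closure_of_closed_add[OF seq_add_in_phi] that unfolding Y_def by blast
  have Y_smult: "seq_smult c a \<in> Y" if "a \<in> Y" for a c
    using closure_of_closed_smult[OF seq_smult_in_phi] that unfolding Y_def by blast
  have zero_Y: "zero_seq \<in> Y" using phiY zero_seq_in_phi by blast
  define g where "g z = lim (sigma_mean p q z y)" for z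
  have g_lim: "sigma_mean p q z y \<longlonglongrightarrow> g z" if "z \<in> Y" for z
  proof -
    have "(\<lambda>j. y j * z j) \<in> sigma_s p q" using y that unfolding d_dual_def Y_def by blast
    then show ?thesis
      unfolding mult_mem_sigma_s_iff sigma_mean_commute[of p q y] g_def by (simp add: convergent_LIMSEQ_iff)
  qed
  have g_add: "g (seq_add a b) = g a + g b" if "a \<in> Y" "b \<in> Y" for a b
  proof (rule LIMSEQ_unique[OF g_lim[OF Y_add[OF that]]])
    show "sigma_mean p q (seq_add a b) y \<longlonglongrightarrow> g a + g b"
      unfolding sigma_mean_add[abs_def] by (rule tendsto_add[OF g_lim g_lim]) fact+
  qed
  have g_smult: "g (seq_smult c a) = c * g a" if "a \<in> Y" for a c
  proof (rule LIMSEQ_unique[OF g_lim[OF Y_smult[OF that]]])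
    show "sigma_mean p q (seq_smult c a) y \<longlonglongrightarrow> c * g a"
      unfolding sigma_mean_smult[abs_def] by (rule tendsto_mult_left[OF g_lim[OF that]])
  qed
  have g_delta: "g (delta j) = y j" for j
  proof -
    have dY: "delta j \<in> Y" using phiY delta_in_phi by blast
    then have "limitin T (avg_section p q (delta j)) (delta j) sequentially"
      using sigma_K unfolding has_sigma_K_def Y_def by blast
    then show ?thesis by (rule LIMSEQ_unique[OF g_lim[OF dY] sigma_mean_delta_tendsto])
  qed
  obtain V C where V: "openin T V" "zero_seq \<in> V" "seq_convex V" and "0 < C"
    and bound: "\<forall>u\<in>V \<inter> Y. cmod (g u) \<le> C"
    using sigma_limit_bounded_near_zero[where g = g, OF Y_closed zero_Y Y_add g_lim] by blast
  then obtain f where f: "f \<in> cdual X T" "\<forall>z\<in>Y. f z = g z"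
    using bounded_functional_extends[OF YX zero_Y Y_add Y_smult g_add g_smult V] by blast
  then show ?thesis using g_delta phiY delta_in_phi by (metis subsetD)
qed

lemma cdual_coeffs_in_d_dual:
  assumes "phi \<subseteq> X" and sigma_K: "has_sigma_K p q T (T closure_of phi)" and f: "f \<in> cdual X T"
  shows "(\<lambda>j. f (delta j)) \<in> d_dual p q (T closure_of phi)"
  unfolding d_dual_def mult_mem_sigma_s_iff
proof (intro CollectI ballI)
  fix z assume "z \<in> T closure_of phi"
  then have "limitin T (avg_section p q z) z sequentially" using sigma_K unfolding has_sigma_K_def by blast
  moreover have "continuous_map T euclidean f" using f unfolding cdual_def by blast
  ultimately have "(\<lambda>n. f (avg_section p q z n)) \<longlonglongrightarrow> f z"
    using continuous_map_limit by (fastforce simp: o_def)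
  moreover have "f (avg_section p q z n) = sigma_mean p q z (\<lambda>j. f (delta j)) n" for n
    using f \<open>phi \<subseteq> X\<close> unfolding cdual_def by (intro functional_avg_section) auto
  ultimately show "convergent (sigma_mean p q (\<lambda>j. f (delta j)) z)"
    unfolding sigma_mean_commute[of p q "\<lambda>j. f (delta j)"] by (auto intro: convergentI)
qed

lemma d_dual_d_dual_subset_DF_plus:
  assumes "phi \<subseteq> X" and "has_sigma_K p q T (T closure_of phi)"
  shows "d_dual p q (d_dual p q (T closure_of phi)) \<subseteq> DF_plus p q X T"
proof
  fix x assume x: "x \<in> d_dual p q (d_dual p q (T closure_of phi))"
  have "convergent (sigma_mean p q x (\<lambda>j. f (delta j)))" if "f \<in> cdual X T" for f
    using x cdual_coeffs_in_d_dual[OF assms that] unfolding d_dual_def mult_mem_sigma_s_iff by blast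
  then show "x \<in> DF_plus p q X T" unfolding mem_DF_plus_iff by blast
qed

lemma DF_plus_subset_d_dual_d_dual:
  assumes "phi \<subseteq> X" and "has_sigma_K p q T (T closure_of phi)"
  shows "DF_plus p q X T \<subseteq> d_dual p q (d_dual p q (T closure_of phi))"
proof
  fix x assume x: "x \<in> DF_plus p q X T"
  have "convergent (sigma_mean p q x y)" if y: "y \<in> d_dual p q (T closure_of phi)" for y
  proof -
    obtain f where "f \<in> cdual X T" "\<forall>j. f (delta j) = y j"
      using exists_cdual_with_coeffs[OF assms y] by blast
    then show ?thesis using x unfolding mem_DF_plus_iff by auto
  qed
  then show "x \<in> d_dual p q (d_dual p q (T closure_of phi))"
    unfolding d_dual_def[of p q "d_dual p q _"] mult_mem_sigma_s_iff by blast
qed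

end

theorem mainTheorem13:
  fixes X :: "seq set" and T :: "seq topology" and p q :: "nat \<Rightarrow> nat"
  assumes "\<forall>n. p n < q n"
    and "filterlim q at_top sequentially"
    and "FK_space X T"
    and "phi \<subseteq> X"
    and "has_sigma_K p q T (T closure_of phi)"
  shows "DF_plus p q X T = d_dual p q (d_dual p q (T closure_of phi))"
proof -
  interpret FK X T by (rule FK.intro) (rule assms(3))
  show ?thesis
    using DF_plus_subset_d_dual_d_dual[OF assms(4,5)] d_dual_d_dual_subset_DF_plus[OF assms(4,5)]
    by (rule equalityI)
qed

end
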